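(* Let $w$ be a graphon. Then: (1) The function $x\mapsto\delta_x(w)$ on $[0,1]$ is measurable. (2) $\big|\{x\in[0,1]: d_w(x)\ge\delta(w)\}\big|\ge|K_{\delta(w)}(w)|\ge\delta(w)$. (3) $\inf_{x\in[0,1]}d_w(x)\le\delta(w)\le\sup_{x\in[0,1]}d_w(x)$.
   Context: A graphon is a Lebesgue-measurable symmetric function $w:[0,1]^2\to[0,1]$. For a measurable $K\subseteq[0,1]$ and $x\in[0,1]$ let $d_w^K(x)=\int_K w(x,y)\,\mathrm{d}y$ and $d_w(x)=d_w^{[0,1]}(x)$ (the degree of $x$). For $\kappa\in[0,1]$ define recursively $K^{1}_{\kappa}(w)=\{x: d_w(x)\ge\kappa\}$ and $K^{n+1}_{\kappa}(w)=\{x\in K^{n}_{\kappa}(w): d_w^{K^{n}_{\kappa}(w)}(x)\ge\kappa\}$, and let the $\kappa$-core be $K_{\kappa}(w)=\bigcap_{n\ge1}K^{n}_{\kappa}(w)$. The shell index of $x\in[0,1]$ is $\delta_x(w)=\sup\{\kappa\in[0,1]: x\in K_\kappa(w)\}$, and the degeneracy is $\delta(w)=\sup\{\kappa\in[0,1]: |K_\kappa(w)|>0\}$, where $|\cdot|$ is Lebesgue measure. *)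

theory Defs
  imports "HOL-Analysis.Analysis"
begin

text \<open>A graphon: Lebesgue-measurable symmetric function on the unit square with values in [0,1].
  We model it as a curried real function; only its values on the unit square matter.\<close>
definition graphon :: "(real \<Rightarrow> real \<Rightarrow> real) \<Rightarrow> bool" where
  "graphon w \<longleftrightarrow>
     (\<lambda>(x,y). w x y) \<in> borel_measurable (lebesgue_on ({0..1} \<times> {0..1})) \<and>
     (\<forall>x\<in>{0..1}. \<forall>y\<in>{0..1}. w x y = w y x \<and> 0 \<le> w x y \<and> w x y \<le> 1)"

definition deg_on :: "(real \<Rightarrow> real \<Rightarrow> real) \<Rightarrow> real set \<Rightarrow> real \<Rightarrow> real" where
  "deg_on w K x = (LINT y:K|lebesgue. w x y)"

definition deg :: "(real \<Rightarrow> real \<Rightarrow> real) \<Rightarrow> real \<Rightarrow> real" where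
  "deg w x = deg_on w {0..1} x"

text \<open>core_iter w k n is K^n_k(w); index 0 is the whole interval [0,1], so that
  core_iter w k 1 = {x in [0,1]. d_w(x) >= k}.\<close>
fun core_iter :: "(real \<Rightarrow> real \<Rightarrow> real) \<Rightarrow> real \<Rightarrow> nat \<Rightarrow> real set" where
  "core_iter w k 0 = {0..1}"
| "core_iter w k (Suc n) = {x \<in> core_iter w k n. deg_on w (core_iter w k n) x \<ge> k}"

definition core :: "(real \<Rightarrow> real \<Rightarrow> real) \<Rightarrow> real \<Rightarrow> real set" where
  "core w k = (\<Inter>n\<in>{1..}. core_iter w k n)"

definition shell_index :: "(real \<Rightarrow> real \<Rightarrow> real) \<Rightarrow> real \<Rightarrow> real" where
  "shell_index w x = Sup {k \<in> {0..1}. x \<in> core w k}"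

definition degeneracy :: "(real \<Rightarrow> real \<Rightarrow> real) \<Rightarrow> real" where
  "degeneracy w = Sup {k \<in> {0..1}. measure lebesgue (core w k) > 0}"

end

theory Submission
  imports Defs "HOL-Real_Asymp.Real_Asymp"
begin

text \<open>Removing from \<open>K \<subseteq> [0,1]\<close> a set of measure \<open>\<epsilon>\<close> lowers every degree into \<open>K\<close> by at
  most \<open>\<epsilon>\<close>. Hence along a decreasing sequence of sets the degree into the intersection is at least
  the limit of the degrees into the sets. Applied to the iterates \<open>K\<^sup>n\<^sub>\<kappa>\<close> this shows that every point
  of the core \<open>K\<^sub>\<kappa>\<close> (\<open>\<kappa> > 0\<close>) has degree at least \<open>\<kappa>\<close> into \<open>K\<^sub>\<kappa>\<close> itself, so a nonempty core has
  measure at least \<open>\<kappa>\<close>; applied to cores \<open>K\<^sub>\<kappa>\<^sub>m\<close> with \<open>\<kappa>\<^sub>m \<nearrow> \<delta>\<close> it shows that their intersection lies in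
  \<open>K\<^sub>\<delta>\<close>, whence \<open>|K\<^sub>\<delta>| \<ge> lim \<kappa>\<^sub>m = \<delta>\<close> for \<open>\<delta> = \<delta>(w)\<close>. The cores are measurable and decrease in \<open>\<kappa>\<close>, so
  \<open>{x. \<delta>\<^sub>x > a}\<close> is the countable union of the cores \<open>K\<^sub>q\<close> over rationals \<open>q \<in> (a,1]\<close>. Finally
  \<open>K\<^sub>\<kappa> = [0,1]\<close> for \<open>\<kappa> \<le> inf d\<^sub>w\<close>, and every point of \<open>K\<^sub>\<kappa>\<close> has degree at least \<open>\<kappa>\<close>.\<close>

lemma borel_measurable_lebesgue_weighted_partial_integral:
  fixes F :: "'a::euclidean_space \<times> 'b::euclidean_space \<Rightarrow> real" and g :: "'b \<Rightarrow> real"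
  assumes F: "F \<in> borel_measurable lebesgue" and g: "g \<in> borel_measurable lebesgue"
  shows "(\<lambda>x. \<integral>y. g y * F (x, y) \<partial>lebesgue) \<in> borel_measurable lebesgue"
proof -
  \<comment> \<open>\<open>lebesgue\<close> on a product is only the completion of the product measure, so Fubini
    is applied to Borel representatives of \<open>F\<close> and \<open>g\<close>.\<close>
  obtain G where G: "G \<in> borel_measurable lborel" and FG: "AE p in lborel. F p = G p"
    using completion_ex_borel_measurable_real[OF F] by blast
  obtain h where h: "h \<in> borel_measurable lborel" and gh: "AE y in lborel. g y = h y"
    using completion_ex_borel_measurable_real[OF g] by blast
  have G2: "G \<in> borel_measurable (lborel \<Otimes>\<^sub>M lborel)"
    using G by (simp add: lborel_prod)
  have "(\<lambda>x. \<integral>y. h y * G (x, y) \<partial>lborel) \<in> borel_measurable lborel"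
    using h G2 by measurable
  then have int_hG: "(\<lambda>x. \<integral>y. h y * G (x, y) \<partial>lborel) \<in> borel_measurable lebesgue"
    by (rule measurable_completion)
  have "AE p in lborel \<Otimes>\<^sub>M lborel. F p = G p"
    unfolding lborel_prod by (rule FG)
  then have "AE x in lborel. AE y in lborel. F (x, y) = G (x, y)"
    by (rule lborel_pair.AE_pair)
  then have "AE x in lborel. (\<integral>y. h y * G (x, y) \<partial>lborel) = (\<integral>y. g y * F (x, y) \<partial>lebesgue)"
  proof eventually_elim
    case (elim x)
    have hG: "(\<lambda>y. h y * G (x, y)) \<in> borel_measurable lborel"
      using h G by measurable
    have ae: "AE y in lebesgue. h y * G (x, y) = g y * F (x, y)"
      using AE_completion[OF elim] AE_completion[OF gh] by eventually_elim simp
    have "(\<integral>y. h y * G (x, y) \<partial>lborel) = (\<integral>y. h y * G (x, y) \<partial>lebesgue)"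
      using hG by (rule integral_completion[symmetric])
    also have "\<dots> = (\<integral>y. g y * F (x, y) \<partial>lebesgue)"
      using measurable_completion[OF hG] borel_measurable_AE[OF measurable_completion[OF hG] ae] ae
      by (rule integral_cong_AE)
    finally show ?case .
  qed
  then have "AE x in lebesgue. (\<integral>y. h y * G (x, y) \<partial>lborel) = (\<integral>y. g y * F (x, y) \<partial>lebesgue)"
    by (rule AE_completion)
  then show ?thesis
    by (rule borel_measurable_AE[OF int_hG])
qed

lemma lmeasurable_subset_unit_interval:
  assumes "K \<in> sets lebesgue" "K \<subseteq> {0..1::real}"
  shows "K \<in> lmeasurable"
  using assms by (intro bounded_set_imp_lmeasurable bounded_subset[OF bounded_closed_interval]) auto

lemma emeasure_subset_unit_interval_finite:
  assumes "K \<in> sets lebesgue" "K \<subseteq> {0..1::real}"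
  shows "emeasure lebesgue K \<noteq> \<infinity>"
  using fmeasurableD2[OF lmeasurable_subset_unit_interval[OF assms]] by (simp add: top_unique)

lemma borel_measurable_graphon_on_square:
  assumes "graphon w"
  shows "(\<lambda>p. indicator ({0..1} \<times> {0..1}) p * w (fst p) (snd p)) \<in> borel_measurable lebesgue"
proof -
  have "{0..1::real} \<times> {0..1::real} \<in> sets borel"
    by (intro borel_closed closed_Times) auto
  then have square: "{0..1::real} \<times> {0..1::real} \<in> sets lebesgue"
    by simp
  have "(\<lambda>(x, y). w x y) \<in> borel_measurable (lebesgue_on ({0..1} \<times> {0..1}))"
    using assms unfolding graphon_def by blast
  then show ?thesis
    using square by (subst (asm) borel_measurable_restrict_space_iff) (auto simp: case_prod_beta')
qed

lemma borel_measurable_deg_on: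
  assumes "graphon w" and "K \<in> sets lebesgue" "K \<subseteq> {0..1}"
  shows "(\<lambda>x. indicator {0..1} x * deg_on w K x) \<in> borel_measurable lebesgue"
proof -
  define W where "W p = indicator ({0..1} \<times> {0..1}) p * w (fst p) (snd p)" for p :: "real \<times> real"
  have "(\<lambda>x. \<integral>y. indicator K y * W (x, y) \<partial>lebesgue) \<in> borel_measurable lebesgue"
    using assms unfolding W_def
    by (intro borel_measurable_lebesgue_weighted_partial_integral borel_measurable_graphon_on_square) auto
  moreover have "(\<integral>y. indicator K y * W (x, y) \<partial>lebesgue) = indicator {0..1} x * deg_on w K x" for x
    using \<open>K \<subseteq> {0..1}\<close>
    by (cases "x \<in> {0..1}")
       (auto simp: W_def deg_on_def set_lebesgue_integral_def indicator_def intro!: Bochner_Integration.integral_cong)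
  ultimately show ?thesis
    by simp
qed

lemma sets_lebesgue_deg_on_ge:
  assumes "graphon w" and "A \<in> sets lebesgue" "A \<subseteq> {0..1}" and "K \<in> sets lebesgue" "K \<subseteq> {0..1}"
  shows "{x \<in> A. k \<le> deg_on w K x} \<in> sets lebesgue"
proof -
  let ?f = "\<lambda>x. indicator {0..1} x * deg_on w K x"
  have "?f -` {k..} \<inter> space lebesgue \<in> sets lebesgue"
    using borel_measurable_deg_on[OF assms(1,4,5)] by (rule measurable_sets) simp
  moreover have "{x \<in> A. k \<le> deg_on w K x} = A \<inter> (?f -` {k..} \<inter> space lebesgue)"
    using \<open>A \<subseteq> {0..1}\<close> by auto
  ultimately show ?thesis
    using \<open>A \<in> sets lebesgue\<close> by auto
qed

lemma deg_on_nonneg: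
  assumes "graphon w" "x \<in> {0..1}" "K \<subseteq> {0..1}"
  shows "0 \<le> deg_on w K x"
  unfolding deg_on_def set_lebesgue_integral_def
  using assms unfolding graphon_def by (intro integral_nonneg_AE AE_I2) (auto simp: indicator_def)

lemma deg_on_le_measure:
  assumes "graphon w" "x \<in> {0..1}" and K: "K \<in> sets lebesgue" "K \<subseteq> {0..1}"
  shows "deg_on w K x \<le> measure lebesgue K"
proof (cases "integrable lebesgue (\<lambda>y. indicator K y *\<^sub>R w x y)")
  case True
  have "deg_on w K x = (\<integral>y. indicator K y *\<^sub>R w x y \<partial>lebesgue)"
    unfolding deg_on_def set_lebesgue_integral_def ..
  also have "\<dots> \<le> (\<integral>y. indicator K y \<partial>lebesgue)"
  proof (rule integral_mono[OF True])
    show "integrable lebesgue (indicator K :: real \<Rightarrow> real)"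
      using emeasure_subset_unit_interval_finite[OF K] K(1) by (simp add: less_top)
    show "indicator K y *\<^sub>R w x y \<le> (indicator K y :: real)" for y
      using assms unfolding graphon_def by (auto simp: indicator_def)
  qed
  also have "\<dots> = measure lebesgue K"
    by simp
  finally show ?thesis .
next
  case False
  then show ?thesis
    by (simp add: deg_on_def set_lebesgue_integral_def not_integrable_integral_eq)
qed

text \<open>The section of a graphon at a point \<open>x\<close> may fail to be measurable on a null set of points,
  and then every \<open>deg_on w K x\<close> is the junk value \<open>0\<close>. A positive degree rules this out.\<close>

lemma set_integrable_if_deg_pos:
  assumes "0 < deg w x"
  shows "set_integrable lebesgue {0..1} (w x)"
  using assms not_integrable_integral_eq
  unfolding deg_def deg_on_def set_lebesgue_integral_def set_integrable_def by fastforce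

lemma deg_on_Diff:
  assumes I: "set_integrable lebesgue {0..1} (w x)"
    and A: "A \<in> sets lebesgue" "A \<subseteq> {0..1}" and B: "B \<in> sets lebesgue" "B \<subseteq> A"
  shows "deg_on w A x = deg_on w B x + deg_on w (A - B) x"
proof -
  have "set_integrable lebesgue B (w x)" "set_integrable lebesgue (A - B) (w x)"
    using A B by (auto intro: set_integrable_subset[OF I])
  then have "deg_on w (B \<union> (A - B)) x = deg_on w B x + deg_on w (A - B) x"
    unfolding deg_on_def using A B by (intro set_integral_Un) auto
  then show ?thesis
    using B by (simp add: Un_absorb1)
qed

lemma deg_on_mono:
  assumes "graphon w" "x \<in> {0..1}" "set_integrable lebesgue {0..1} (w x)"
    and "A \<in> sets lebesgue" "A \<subseteq> {0..1}" "B \<in> sets lebesgue" "B \<subseteq> A"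
  shows "deg_on w B x \<le> deg_on w A x"
  using deg_on_Diff[of w x, OF assms(3-)] deg_on_nonneg[OF assms(1,2), of "A - B"] assms(5) by auto

lemma deg_on_le_add_measure_Diff:
  assumes "graphon w" "x \<in> {0..1}" "set_integrable lebesgue {0..1} (w x)"
    and A: "A \<in> sets lebesgue" "A \<subseteq> {0..1}" and B: "B \<in> sets lebesgue" "B \<subseteq> A"
  shows "deg_on w A x \<le> deg_on w B x + (measure lebesgue A - measure lebesgue B)"
proof -
  have "deg_on w (A - B) x \<le> measure lebesgue (A - B)"
    using assms by (intro deg_on_le_measure) auto
  also have "\<dots> = measure lebesgue A - measure lebesgue B"
    using A B by (intro measure_Diff emeasure_subset_unit_interval_finite) auto
  finally show ?thesis
    using deg_on_Diff[of w x, OF assms(3-)] by simp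
qed

lemma deg_on_INT_ge_lim:
  assumes "graphon w" "x \<in> {0..1}" "set_integrable lebesgue {0..1} (w x)"
    and A: "\<And>n. A n \<in> sets lebesgue" "\<And>n. A n \<subseteq> {0..1}" "decseq A"
    and c: "\<And>n. c n \<le> deg_on w (A n) x" "c \<longlonglongrightarrow> c0"
  shows "c0 \<le> deg_on w (\<Inter>n. A n) x"
proof -
  define L where "L = (\<Inter>n. A n)"
  have L: "L \<in> sets lebesgue" "L \<subseteq> A n" for n
    using A unfolding L_def by auto
  have "(\<lambda>n. measure lebesgue (A n)) \<longlonglongrightarrow> measure lebesgue L"
    unfolding L_def using A by (intro Lim_measure_decseq emeasure_subset_unit_interval_finite) auto
  then have "(\<lambda>n. deg_on w L x + (measure lebesgue (A n) - measure lebesgue L))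
      \<longlonglongrightarrow> deg_on w L x + (measure lebesgue L - measure lebesgue L)"
    by (intro tendsto_intros)
  moreover have "c n \<le> deg_on w L x + (measure lebesgue (A n) - measure lebesgue L)" for n
    using c(1)[of n] deg_on_le_add_measure_Diff[OF assms(1-3) A(1,2) L(1) L(2)[of n]] by simp
  ultimately show ?thesis
    unfolding L_def using LIMSEQ_le[OF c(2)] by force
qed

lemma core_iter_subset: "core_iter w k n \<subseteq> {0..1}"
  by (induction n) auto

lemma core_iter_antimono: "m \<le> n \<Longrightarrow> core_iter w k n \<subseteq> core_iter w k m"
  by (induction n rule: dec_induct) auto

lemma decseq_core_iter: "decseq (core_iter w k)"
  unfolding decseq_def using core_iter_antimono by blast

lemma core_iter_deg_ge:
  assumes "x \<in> core_iter w k (Suc n)"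
  shows "k \<le> deg w x"
  using core_iter_antimono[of 1 "Suc n" w k] assms by (auto simp: deg_def)

lemma sets_lebesgue_core_iter:
  assumes "graphon w"
  shows "core_iter w k n \<in> sets lebesgue"
proof (induction n)
  case (Suc n)
  then show ?case
    using sets_lebesgue_deg_on_ge[OF assms] core_iter_subset by simp
qed simp

lemma core_eq_INT: "core w k = (\<Inter>n. core_iter w k n)"
  unfolding core_def using INT_decseq_offset[OF decseq_core_iter] by simp

lemma core_subset: "core w k \<subseteq> {0..1}"
  unfolding core_eq_INT using core_iter_subset by blast

lemma sets_lebesgue_core: "graphon w \<Longrightarrow> core w k \<in> sets lebesgue"
  unfolding core_eq_INT using sets_lebesgue_core_iter by blast

lemma core_deg_ge: "x \<in> core w k \<Longrightarrow> k \<le> deg w x"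
  unfolding core_eq_INT using core_iter_deg_ge by blast

lemma core_eq_unit_interval:
  assumes "\<And>x. x \<in> {0..1} \<Longrightarrow> k \<le> deg w x"
  shows "core w k = {0..1}"
proof -
  have "core_iter w k n = {0..1}" for n
    using assms by (induction n) (auto simp: deg_def)
  then show ?thesis
    unfolding core_eq_INT by simp
qed

lemma core_nonpos:
  assumes "graphon w" "k \<le> 0"
  shows "core w k = {0..1}"
  using assms deg_on_nonneg[OF assms(1)] by (intro core_eq_unit_interval) (force simp: deg_def)

lemma core_antimono:
  assumes "graphon w" "k1 \<le> k2"
  shows "core w k2 \<subseteq> core w k1"
proof (cases "k1 \<le> 0")
  case True
  then show ?thesis
    using core_nonpos[OF assms(1)] core_subset by auto
next
  case False
  have "core_iter w k2 n \<subseteq> core_iter w k1 n" for n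
  proof (induction n)
    case (Suc n)
    show ?case
    proof
      fix x assume x: "x \<in> core_iter w k2 (Suc n)"
      then have "x \<in> core_iter w k2 n"
        by simp
      moreover have "x \<in> {0..1}"
        using x core_iter_subset by blast
      moreover have "set_integrable lebesgue {0..1} (w x)"
        using False assms(2) core_iter_deg_ge[OF x] by (intro set_integrable_if_deg_pos) auto
      ultimately have "deg_on w (core_iter w k2 n) x \<le> deg_on w (core_iter w k1 n) x"
        using Suc core_iter_subset sets_lebesgue_core_iter[OF assms(1)]
        by (intro deg_on_mono[OF assms(1)]) auto
      then show "x \<in> core_iter w k1 (Suc n)"
        using x Suc assms(2) by auto
    qed
  qed simp
  then show ?thesis
    unfolding core_eq_INT by blast
qed

lemma core_deg_on_ge:
  assumes "graphon w" "0 < k" "x \<in> core w k"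
  shows "k \<le> deg_on w (core w k) x"
proof -
  have x: "x \<in> {0..1}"
    using assms(3) core_subset by blast
  have I: "set_integrable lebesgue {0..1} (w x)"
    using assms(2) core_deg_ge[OF assms(3)] by (intro set_integrable_if_deg_pos) simp
  have ge: "k \<le> deg_on w (core_iter w k n) x" for n
  proof -
    have "x \<in> core_iter w k (Suc n)"
      using assms(3) unfolding core_eq_INT by blast
    then show ?thesis
      by simp
  qed
  show ?thesis
    unfolding core_eq_INT
    by (rule deg_on_INT_ge_lim[OF assms(1) x I sets_lebesgue_core_iter[OF assms(1)]
          core_iter_subset decseq_core_iter ge tendsto_const])
qed

lemma measure_core_ge:
  assumes "graphon w" "0 < k" "core w k \<noteq> {}"
  shows "k \<le> measure lebesgue (core w k)"
proof -
  obtain x where x: "x \<in> core w k"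
    using assms(3) by blast
  then have "k \<le> deg_on w (core w k) x"
    by (rule core_deg_on_ge[OF assms(1,2)])
  also have "\<dots> \<le> measure lebesgue (core w k)"
    using x core_subset sets_lebesgue_core[OF assms(1)] by (intro deg_on_le_measure[OF assms(1)]) blast+
  finally show ?thesis .
qed

lemma INT_core_subset:
  assumes "graphon w" "\<And>m. 0 < \<kappa> m" "incseq \<kappa>" "\<kappa> \<longlonglongrightarrow> k"
  shows "(\<Inter>m. core w (\<kappa> m)) \<subseteq> core w k"
proof -
  define L where "L = (\<Inter>m. core w (\<kappa> m))"
  have L: "L \<in> sets lebesgue"
    unfolding L_def using sets_lebesgue_core[OF assms(1)] by blast
  have dec: "decseq (\<lambda>m. core w (\<kappa> m))"
    using core_antimono[OF assms(1)] assms(3) unfolding decseq_def incseq_def by blast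
  have "L \<subseteq> core_iter w k n" for n
  proof (induction n)
    case 0
    then show ?case
      unfolding L_def using core_subset[of w "\<kappa> 0"] by auto
  next
    case (Suc n)
    show ?case
    proof
      fix x assume xL: "x \<in> L"
      then have xcore: "x \<in> core w (\<kappa> m)" for m
        unfolding L_def by blast
      have x: "x \<in> {0..1}" "set_integrable lebesgue {0..1} (w x)"
        using xcore[of 0] assms(2)[of 0] core_subset[of w "\<kappa> 0"] core_deg_ge[of x w]
        by (auto intro!: set_integrable_if_deg_pos less_le_trans[of 0 "\<kappa> 0"])
      have "k \<le> deg_on w L x"
        unfolding L_def using core_deg_on_ge[OF assms(1,2) xcore] core_subset dec assms(4)
          sets_lebesgue_core[OF assms(1)]
        by (intro deg_on_INT_ge_lim[OF assms(1) x]) auto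
      also have "\<dots> \<le> deg_on w (core_iter w k n) x"
        using Suc core_iter_subset sets_lebesgue_core_iter[OF assms(1)] L
        by (intro deg_on_mono[OF assms(1) x]) auto
      finally show "x \<in> core_iter w k (Suc n)"
        using Suc xL by auto
    qed
  qed
  then show ?thesis
    unfolding L_def core_eq_INT by blast
qed

lemma measure_core_ge_of_nonempty_below:
  assumes "graphon w" "0 < k" "\<And>\<kappa>. 0 < \<kappa> \<Longrightarrow> \<kappa> < k \<Longrightarrow> core w \<kappa> \<noteq> {}"
  shows "k \<le> measure lebesgue (core w k)"
proof -
  define \<kappa> where "\<kappa> m = k * (real m + 1) / (real m + 2)" for m :: nat
  have \<kappa>: "0 < \<kappa> m" "\<kappa> m < k" for m
    using assms(2) unfolding \<kappa>_def by (auto simp: field_simps intro: add_pos_nonneg)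
  have "incseq \<kappa>"
    using assms(2) by (intro incseq_SucI) (simp add: \<kappa>_def field_simps)
  moreover have lim: "\<kappa> \<longlonglongrightarrow> k"
    unfolding \<kappa>_def by real_asymp
  ultimately have sub: "(\<Inter>m. core w (\<kappa> m)) \<subseteq> core w k"
    by (intro INT_core_subset[OF assms(1) \<kappa>(1)])
  have "decseq (\<lambda>m. core w (\<kappa> m))"
    using core_antimono[OF assms(1)] \<open>incseq \<kappa>\<close> unfolding decseq_def incseq_def by blast
  then have "(\<lambda>m. measure lebesgue (core w (\<kappa> m))) \<longlonglongrightarrow> measure lebesgue (\<Inter>m. core w (\<kappa> m))"
    using sets_lebesgue_core[OF assms(1)] core_subset
    by (intro Lim_measure_decseq emeasure_subset_unit_interval_finite) auto
  then have "k \<le> measure lebesgue (\<Inter>m. core w (\<kappa> m))"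
    using measure_core_ge[OF assms(1) \<kappa>(1) assms(3)[OF \<kappa>]] by (intro LIMSEQ_le[OF lim]) auto
  also have "\<dots> \<le> measure lebesgue (core w k)"
    using sub sets_lebesgue_core[OF assms(1)] core_subset
    by (intro measure_mono_fmeasurable lmeasurable_subset_unit_interval) auto
  finally show ?thesis .
qed

lemma shell_index_gt_iff:
  assumes "graphon w" "x \<in> {0..1}"
  shows "a < shell_index w x \<longleftrightarrow> (\<exists>q\<in>\<rat>. a < q \<and> q \<le> 1 \<and> x \<in> core w q)"
proof -
  let ?S = "{k \<in> {0..1}. x \<in> core w k}"
  have "0 \<in> ?S"
    using assms core_nonpos[OF assms(1), of 0] by simp
  moreover have "bdd_above ?S"
    by (rule bdd_aboveI[of _ 1]) simp
  ultimately have "a < Sup ?S \<longleftrightarrow> (\<exists>k\<in>?S. a < k)"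
    using less_cSup_iff[of ?S a] by blast
  also have "\<dots> \<longleftrightarrow> (\<exists>q\<in>\<rat>. a < q \<and> q \<le> 1 \<and> x \<in> core w q)"
  proof
    assume "\<exists>k\<in>?S. a < k"
    then obtain k q where "k \<in> ?S" "q \<in> \<rat>" "a < q" "q < k"
      using Rats_dense_in_real by blast
    then show "\<exists>q\<in>\<rat>. a < q \<and> q \<le> 1 \<and> x \<in> core w q"
      using core_antimono[OF assms(1), of q k] by auto
  next
    assume "\<exists>q\<in>\<rat>. a < q \<and> q \<le> 1 \<and> x \<in> core w q"
    then obtain q where q: "a < q" "q \<le> 1" "x \<in> core w q"
      by blast
    show "\<exists>k\<in>?S. a < k"
    proof (cases "0 \<le> q")
      case True
      then show ?thesis
        using q by auto
    next
      case False
      then show ?thesis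
        using q(1) \<open>0 \<in> ?S\<close> by (intro bexI[of _ 0]) auto
    qed
  qed
  finally show ?thesis
    unfolding shell_index_def .
qed

lemma borel_measurable_shell_index:
  assumes "graphon w"
  shows "shell_index w \<in> borel_measurable (lebesgue_on {0..1})"
  unfolding borel_measurable_iff_greater
proof
  fix a :: real
  have "{x \<in> {0..1}. a < shell_index w x} = (\<Union>q\<in>\<rat> \<inter> {a<..1}. core w q)"
  proof (intro set_eqI iffI)
    fix x assume "x \<in> {x \<in> {0..1}. a < shell_index w x}"
    then show "x \<in> (\<Union>q\<in>\<rat> \<inter> {a<..1}. core w q)"
      using shell_index_gt_iff[OF assms] by fastforce
  next
    fix x assume x: "x \<in> (\<Union>q\<in>\<rat> \<inter> {a<..1}. core w q)"
    then have "x \<in> {0..1}"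
      using core_subset by blast
    then show "x \<in> {x \<in> {0..1}. a < shell_index w x}"
      using x shell_index_gt_iff[OF assms] by auto
  qed
  also have "\<dots> \<in> sets lebesgue"
    using sets_lebesgue_core[OF assms] by (intro sets.countable_UN'' countable_Int1 countable_rat) auto
  finally show "{x \<in> space (lebesgue_on {0..1}). a < shell_index w x} \<in> sets (lebesgue_on {0..1})"
    by (auto simp: sets_restrict_space_iff space_restrict_space)
qed

lemma zero_mem_degeneracy_set:
  assumes "graphon w"
  shows "0 \<in> {k \<in> {0..1}. 0 < measure lebesgue (core w k)}"
  using core_nonpos[OF assms, of 0] by simp

lemma degeneracy_ge:
  assumes "k \<in> {0..1}" "0 < measure lebesgue (core w k)"
  shows "k \<le> degeneracy w"
  unfolding degeneracy_def using assms by (intro cSup_upper bdd_aboveI[of _ 1]) auto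

lemma degeneracy_nonneg: "graphon w \<Longrightarrow> 0 \<le> degeneracy w"
  using degeneracy_ge zero_mem_degeneracy_set by blast

lemma degeneracy_le:
  assumes "graphon w" "\<And>k. k \<in> {0..1} \<Longrightarrow> 0 < measure lebesgue (core w k) \<Longrightarrow> k \<le> c"
  shows "degeneracy w \<le> c"
  unfolding degeneracy_def using assms(2) zero_mem_degeneracy_set[OF assms(1)]
  by (intro cSup_least) blast+

lemma core_nonempty_below_degeneracy:
  assumes "graphon w" "k < degeneracy w"
  shows "core w k \<noteq> {}"
proof -
  have "bdd_above {k \<in> {0..1}. 0 < measure lebesgue (core w k)}"
    by (rule bdd_aboveI[of _ 1]) simp
  then obtain k' where "k < k'" "0 < measure lebesgue (core w k')"
    using assms(2) less_cSup_iff zero_mem_degeneracy_set[OF assms(1)] unfolding degeneracy_def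
    by (metis (no_types, lifting) empty_iff mem_Collect_eq)
  then show ?thesis
    using core_antimono[OF assms(1), of k k'] by auto
qed

theorem lemma3:
  fixes w :: "real \<Rightarrow> real \<Rightarrow> real"
  assumes "graphon w"
  shows "(\<lambda>x. shell_index w x) \<in> borel_measurable (lebesgue_on {0..1})
    \<and> measure lebesgue {x \<in> {0..1}. deg w x \<ge> degeneracy w} \<ge> measure lebesgue (core w (degeneracy w))
    \<and> measure lebesgue (core w (degeneracy w)) \<ge> degeneracy w
    \<and> (INF x\<in>{0..1}. deg w x) \<le> degeneracy w
    \<and> degeneracy w \<le> (SUP x\<in>{0..1}. deg w x)"
proof (intro conjI)
  let ?\<delta> = "degeneracy w"
  have deg_bounds: "0 \<le> deg w x" "deg w x \<le> 1" if "x \<in> {0..1}" for x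
    using deg_on_nonneg[OF assms that] deg_on_le_measure[OF assms that, of "{0..1}"]
    by (auto simp: deg_def)
  show "(\<lambda>x. shell_index w x) \<in> borel_measurable (lebesgue_on {0..1})"
    using borel_measurable_shell_index[OF assms] by simp
  have "core w ?\<delta> \<subseteq> {x \<in> {0..1}. ?\<delta> \<le> deg w x}"
    using core_subset core_deg_ge by blast
  moreover have "{x \<in> {0..1}. ?\<delta> \<le> deg w x} \<in> lmeasurable"
    unfolding deg_def by (intro lmeasurable_subset_unit_interval sets_lebesgue_deg_on_ge[OF assms]) auto
  ultimately show "measure lebesgue (core w ?\<delta>) \<le> measure lebesgue {x \<in> {0..1}. ?\<delta> \<le> deg w x}"
    by (rule measure_mono_fmeasurable[OF _ sets_lebesgue_core[OF assms]])
  show "?\<delta> \<le> measure lebesgue (core w ?\<delta>)"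
  proof (cases "?\<delta> = 0")
    case False
    then have "0 < ?\<delta>"
      using degeneracy_nonneg[OF assms] by simp
    then show ?thesis
      using core_nonempty_below_degeneracy[OF assms] by (rule measure_core_ge_of_nonempty_below[OF assms])
  qed simp
  let ?m = "INF x\<in>{0..1}. deg w x"
  have m_le: "?m \<le> deg w x" if "x \<in> {0..1}" for x
    using that deg_bounds by (intro cINF_lower bdd_belowI2) auto
  then have "core w ?m = {0..1}"
    by (rule core_eq_unit_interval)
  moreover have "?m \<in> {0..1}"
    using deg_bounds[of 0] m_le[of 0] by (auto intro: cINF_greatest deg_bounds)
  ultimately show "?m \<le> ?\<delta>"
    by (intro degeneracy_ge) auto
  show "?\<delta> \<le> (SUP x\<in>{0..1}. deg w x)"
  proof (rule degeneracy_le[OF assms])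
    fix k assume "0 < measure lebesgue (core w k)"
    then obtain x where x: "x \<in> core w k"
      by fastforce
    then have "x \<in> {0..1}"
      using core_subset by blast
    then show "k \<le> (SUP x\<in>{0..1}. deg w x)"
      using core_deg_ge[OF x] deg_bounds by (intro cSUP_upper2 bdd_aboveI2) auto
  qed
qed

end
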